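(* Let $C=\mathbb{S}^1\times\mathbb{R}$ be the flat Euclidean cylinder with distance $d$, $\theta_0\in\mathbb{S}^1$, $v=\{\theta_0\}\times\mathbb{R}$, and let $f:C\to C$ be a geodesic-preserving bijection with $f(v)=v$, $f(\theta_0,0)=(\theta_0,0)$ and $f(\theta_0,1)=(\theta_0,1)$. If $x,y\in C$ lie on the same vertical geodesic and $d(x,y)=1$, then $d(f(x),f(y))=1$.
   Context: $C$ carries the product of the flat metric on $\mathbb{S}^1=\mathbb{R}/\mathbb{Z}$ (circumference $1$) and the standard metric on $\mathbb{R}$. A geodesic is the image of a locally isometric immersion of the whole real line; a bijection (not assumed continuous) is geodesic-preserving if it maps every geodesic onto a geodesic as a set. Vertical geodesics are the lines $\{\theta\}\times\mathbb{R}$. *)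

theory Defs
  imports "HOL-Analysis.Analysis"
begin

text \<open>The flat cylinder C = S^1 x R with S^1 = R/Z (circumference 1).
  A point is represented by a pair (theta, t) with theta in [0,1) the
  canonical representative of the angle.\<close>

definition Cyl :: "(real \<times> real) set" where
  "Cyl = {0..<1} \<times> (UNIV :: real set)"

definition circ_dist :: "real \<Rightarrow> real \<Rightarrow> real" where
  "circ_dist a b = min (frac (a - b)) (1 - frac (a - b))"

definition cyl_dist :: "real \<times> real \<Rightarrow> real \<times> real \<Rightarrow> real" where
  "cyl_dist x y = sqrt ((circ_dist (fst x) (fst y))\<^sup>2 + (snd x - snd y)\<^sup>2)"

definition loc_isometric :: "(real \<Rightarrow> real \<times> real) \<Rightarrow> bool" where
  "loc_isometric \<gamma> \<longleftrightarrow> (\<forall>s. \<gamma> s \<in> Cyl) \<and>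
     (\<forall>s. \<exists>e>0. \<forall>a b. \<bar>a - s\<bar> < e \<longrightarrow> \<bar>b - s\<bar> < e \<longrightarrow>
        cyl_dist (\<gamma> a) (\<gamma> b) = \<bar>a - b\<bar>)"

definition cyl_geodesic :: "(real \<times> real) set \<Rightarrow> bool" where
  "cyl_geodesic G \<longleftrightarrow> (\<exists>\<gamma>. loc_isometric \<gamma> \<and> G = range \<gamma>)"

definition geodesic_preserving :: "(real \<times> real \<Rightarrow> real \<times> real) \<Rightarrow> bool" where
  "geodesic_preserving f \<longleftrightarrow> (\<forall>G. cyl_geodesic G \<longrightarrow> cyl_geodesic (f ` G))"

definition vert :: "real \<Rightarrow> (real \<times> real) set" where
  "vert \<theta> = {\<theta>} \<times> (UNIV :: real set)"

end

(*
  Geodesics of the cylinder are exactly the images of straight lines of the plane under the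
  covering map (x, t) \<mapsto> (frac x, t): a locally isometric curve lifts locally to the plane,
  where it is affine, and its direction and offset are locally constant, hence constant.
  So the geodesics are the horizontal circles, the vertical lines and the helices.

  Since f maps v onto v and is injective, the points of f G on v are the images of the points of
  G on v. A vertical line other than v misses v, so its image is a vertical line; a horizontal
  circle meets v exactly once, and so does its image, which is therefore a horizontal circle
  (other geodesics meet v never or infinitely often). Hence f (\<theta>, t) = (\<phi> \<theta>, h t) with h
  injective and h 0 = 0, h 1 = 1. For a slope p \<notin> \<int>, the helix H of slope p through
  (\<theta>0, 0) and its translate H + (0, 1) are disjoint, so their images are disjoint, hence
  parallel, helices. Comparing the heights at which these two images cross v and the vertical
  line through f (\<theta>, t) shows h (t + 1) - h t - 1 = h T with p T \<in> \<int>. By injectivity of h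
  the number T does not depend on p, which forces T = 0.
*)

theory Submission
  imports Defs
begin

section \<open>Distances on the circle and on the cylinder\<close>

lemma frac_eq_iff_diff_Ints: "frac x = frac y \<longleftrightarrow> x - y \<in> \<int>"
proof
  assume "frac x = frac y"
  then obtain n where "x = y + of_int n" by (rule frac_eqE)
  then show "x - y \<in> \<int>" by simp
next
  assume "x - y \<in> \<int>"
  then have "frac (y + (x - y)) = frac y" by (rule frac_add_int_right)
  then show "frac x = frac y" by simp
qed

lemma circ_dist_le: "circ_dist x y \<le> \<bar>x - y - of_int m\<bar>"
proof -
  define k where "k = \<lfloor>x - y\<rfloor> - m"
  have eq: "x - y - of_int m = frac (x - y) + of_int k"
    unfolding k_def by (simp add: frac_def)
  show ?thesis
  proof (cases "k \<ge> 0")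
    case True
    then show ?thesis unfolding circ_dist_def eq using frac_ge_0[of "x - y"] by simp
  next
    case False
    then have "1 - frac (x - y) \<le> \<bar>frac (x - y) + of_int k\<bar>"
      using frac_lt_1[of "x - y"] by linarith
    then show ?thesis unfolding circ_dist_def eq by simp
  qed
qed

lemma circ_dist_attained: "\<exists>m::int. circ_dist x y = \<bar>x - y - of_int m\<bar>"
proof (cases "frac (x - y) \<le> 1 - frac (x - y)")
  case True
  then have "circ_dist x y = \<bar>x - y - of_int \<lfloor>x - y\<rfloor>\<bar>"
    unfolding circ_dist_def using frac_ge_0[of "x - y"] by (simp add: frac_def)
  then show ?thesis by blast
next
  case False
  then have "circ_dist x y = \<bar>x - y - of_int (\<lfloor>x - y\<rfloor> + 1)\<bar>"
    unfolding circ_dist_def using frac_lt_1[of "x - y"] by (simp add: frac_def)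
  then show ?thesis by blast
qed

lemma circ_dist_frac [simp]: "circ_dist (frac x) (frac y) = circ_dist x y"
proof -
  have "frac x - frac y = (x - y) + of_int (\<lfloor>y\<rfloor> - \<lfloor>x\<rfloor>)"
    by (simp add: frac_def)
  then show ?thesis unfolding circ_dist_def by (metis frac_add_of_int_right)
qed

lemma circ_dist_eq_abs:
  assumes "\<bar>x - y\<bar> \<le> 1/2"
  shows "circ_dist x y = \<bar>x - y\<bar>"
proof -
  obtain m where m: "circ_dist x y = \<bar>x - y - of_int m\<bar>"
    using circ_dist_attained by blast
  have "m = 0 \<or> \<bar>of_int m :: real\<bar> \<ge> 1" by linarith
  then show ?thesis using m circ_dist_le[of x y 0] assms by (elim disjE) (simp, linarith)
qed

lemma circ_dist_lift: "\<exists>x'. frac x' = frac x \<and> \<bar>x' - y\<bar> = circ_dist x y"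
proof -
  obtain m where "circ_dist x y = \<bar>x - y - of_int m\<bar>"
    using circ_dist_attained by blast
  then show ?thesis
    by (intro exI[of _ "x + of_int (- m)"] conjI frac_add_of_int_right) (simp add: algebra_simps)
qed

lemma circ_dist_le_cyl_dist: "circ_dist (fst x) (fst y) \<le> cyl_dist x y"
  unfolding cyl_dist_def by (rule real_le_rsqrt) simp

lemma cyl_dist_vert: "cyl_dist (\<theta>, s) (\<theta>, t) = \<bar>s - t\<bar>"
  by (simp add: cyl_dist_def circ_dist_def)

section \<open>Geodesics are projections of straight lines\<close>

definition cyl_proj :: "real \<times> real \<Rightarrow> real \<times> real" where
  "cyl_proj z = (frac (fst z), snd z)"

lemma cyl_proj_in_Cyl: "cyl_proj z \<in> Cyl"
  unfolding cyl_proj_def Cyl_def using frac_ge_0 frac_lt_1 by auto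

lemma cyl_proj_on_Cyl: "q \<in> Cyl \<Longrightarrow> cyl_proj q = q"
  unfolding cyl_proj_def Cyl_def by auto

lemma cyl_proj_eq_iff: "cyl_proj z = cyl_proj w \<longleftrightarrow> fst z - fst w \<in> \<int> \<and> snd z = snd w"
  unfolding cyl_proj_def by (simp add: frac_eq_iff_diff_Ints)

lemma cyl_proj_add_cong: "cyl_proj z = cyl_proj z' \<Longrightarrow> cyl_proj (z + w) = cyl_proj (z' + w)"
  unfolding cyl_proj_eq_iff by (simp add: algebra_simps)

lemma cyl_dist_cyl_proj:
  assumes "\<bar>fst z - fst w\<bar> \<le> 1/2"
  shows "cyl_dist (cyl_proj z) (cyl_proj w) = dist z w"
  using assms
  by (simp add: cyl_dist_def cyl_proj_def dist_prod_def dist_real_def circ_dist_eq_abs)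

lemma isometry_from_reals_affine:
  fixes P :: "real \<Rightarrow> 'a::real_inner"
  assumes iso: "\<And>a b. a \<in> S \<Longrightarrow> b \<in> S \<Longrightarrow> dist (P a) (P b) = \<bar>a - b\<bar>"
    and "s \<in> S" "s1 \<in> S" "s1 \<noteq> s"
  obtains u where "norm u = 1" "\<And>a. a \<in> S \<Longrightarrow> P a = P s + (a - s) *\<^sub>R u"
proof
  define v where "v a = P a - P s" for a
  have norm_v: "norm (v a - v b) = \<bar>a - b\<bar>" if "a \<in> S" "b \<in> S" for a b
    using iso[OF that] by (simp add: v_def dist_norm)
  have inner_v: "inner (v a) (v b) = (a - s) * (b - s)" if "a \<in> S" "b \<in> S" for a b
  proof -
    have "inner (v a) (v b) = ((a - s)\<^sup>2 + (b - s)\<^sup>2 - (a - b)\<^sup>2) / 2"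
      unfolding dot_norm_neg
      using norm_v[OF that] norm_v[OF that(1) \<open>s \<in> S\<close>] norm_v[OF that(2) \<open>s \<in> S\<close>]
      by (simp add: v_def)
    then show ?thesis by (simp add: power2_eq_square algebra_simps)
  qed
  define u where "u = (1 / (s1 - s)) *\<^sub>R v s1"
  show "norm u = 1"
    using norm_v[OF \<open>s1 \<in> S\<close> \<open>s \<in> S\<close>] \<open>s1 \<noteq> s\<close> by (simp add: u_def v_def)
  have expand:
    "inner (x - c *\<^sub>R y) (x - c *\<^sub>R y) = inner x x - 2 * c * inner x y + c\<^sup>2 * inner y y"
    for x y :: 'a and c
    by (simp add: inner_commute[of y x] power2_eq_square algebra_simps)
  fix a assume "a \<in> S"
  have "inner (v a) u = a - s"
    using inner_v[OF \<open>a \<in> S\<close> \<open>s1 \<in> S\<close>] \<open>s1 \<noteq> s\<close> by (simp add: u_def)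
  moreover have "inner (v a) (v a) = (a - s)\<^sup>2"
    using inner_v[OF \<open>a \<in> S\<close> \<open>a \<in> S\<close>] by (simp add: power2_eq_square)
  moreover have "inner u u = 1"
    using \<open>norm u = 1\<close> by (simp add: dot_square_norm)
  ultimately have "inner (v a - (a - s) *\<^sub>R u) (v a - (a - s) *\<^sub>R u) = 0"
    unfolding expand by (simp add: power2_eq_square)
  then show "P a = P s + (a - s) *\<^sub>R u"
    by (simp add: v_def) (metis add.commute diff_add_cancel)
qed

lemma range_line_reparam:
  fixes g :: "'a::real_vector \<Rightarrow> 'b"
  assumes "r \<noteq> 0"
  shows "range (\<lambda>a. g (p + a *\<^sub>R u)) = range (\<lambda>a. g ((p + b *\<^sub>R u) + a *\<^sub>R (r *\<^sub>R u)))"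
proof -
  have old_param: "p + a *\<^sub>R u = (p + b *\<^sub>R u) + ((a - b) / r) *\<^sub>R (r *\<^sub>R u)" for a
  proof -
    have "(p + b *\<^sub>R u) + ((a - b) / r) *\<^sub>R (r *\<^sub>R u) = p + (b + (a - b) / r * r) *\<^sub>R u"
      by (simp add: scaleR_add_left)
    then show ?thesis using assms by simp
  qed
  have new_param: "(p + b *\<^sub>R u) + a *\<^sub>R (r *\<^sub>R u) = p + (b + a * r) *\<^sub>R u" for a
    by (simp add: scaleR_add_left)
  show ?thesis
  proof (intro equalityI subsetI)
    fix z assume "z \<in> range (\<lambda>a. g (p + a *\<^sub>R u))"
    then obtain a where "z = g (p + a *\<^sub>R u)" by blast
    then show "z \<in> range (\<lambda>a. g ((p + b *\<^sub>R u) + a *\<^sub>R (r *\<^sub>R u)))"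
      by (subst (asm) old_param) blast
  next
    fix z assume "z \<in> range (\<lambda>a. g ((p + b *\<^sub>R u) + a *\<^sub>R (r *\<^sub>R u)))"
    then show "z \<in> range (\<lambda>a. g (p + a *\<^sub>R u))"
      by (auto simp only: new_param)
  qed
qed

lemma loc_isometric_cyl_line:
  assumes "norm u = 1"
  shows "loc_isometric (\<lambda>a. cyl_proj (p + a *\<^sub>R u))"
  unfolding loc_isometric_def
proof (intro conjI allI exI[of _ "1/4"] impI)
  fix s a b :: real
  assume "\<bar>a - s\<bar> < 1/4" "\<bar>b - s\<bar> < 1/4"
  then have "\<bar>a - b\<bar> \<le> 1/2" by linarith
  moreover have "\<bar>fst u\<bar> \<le> 1"
    using norm_fst_le[of "fst u" "snd u"] assms by simp
  ultimately have "\<bar>a - b\<bar> * \<bar>fst u\<bar> \<le> 1/2 * 1"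
    by (intro mult_mono) auto
  then show "cyl_dist (cyl_proj (p + a *\<^sub>R u)) (cyl_proj (p + b *\<^sub>R u)) = \<bar>a - b\<bar>"
    using assms
    by (subst cyl_dist_cyl_proj)
      (simp_all add: dist_norm abs_mult left_diff_distrib[symmetric] flip: scaleR_diff_left)
qed (simp_all add: cyl_proj_in_Cyl)

lemma loc_isometric_locally_cyl_line:
  assumes "loc_isometric \<gamma>"
  obtains e p u where "e > 0" "norm u = 1"
    "\<And>a. \<bar>a - s\<bar> < e \<Longrightarrow> \<gamma> a = cyl_proj (p + a *\<^sub>R u)"
proof -
  obtain e0 where "e0 > 0"
    and iso: "\<And>a b. \<bar>a - s\<bar> < e0 \<Longrightarrow> \<bar>b - s\<bar> < e0 \<Longrightarrow>
      cyl_dist (\<gamma> a) (\<gamma> b) = \<bar>a - b\<bar>"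
    using assms unfolding loc_isometric_def by metis
  define e where "e = min e0 (1/4)"
  have "\<exists>w. cyl_proj w = \<gamma> a \<and> \<bar>fst w - fst (\<gamma> s)\<bar> = circ_dist (fst (\<gamma> a)) (fst (\<gamma> s))"
    for a
  proof -
    obtain x where "frac x = frac (fst (\<gamma> a))"
      "\<bar>x - fst (\<gamma> s)\<bar> = circ_dist (fst (\<gamma> a)) (fst (\<gamma> s))"
      using circ_dist_lift by blast
    moreover have "cyl_proj (\<gamma> a) = \<gamma> a"
      using assms cyl_proj_on_Cyl unfolding loc_isometric_def by blast
    ultimately show ?thesis
      by (intro exI[of _ "(x, snd (\<gamma> a))"]) (simp add: cyl_proj_def)
  qed
  then obtain P where P: "\<And>a. cyl_proj (P a) = \<gamma> a"
    and P_close: "\<And>a. \<bar>fst (P a) - fst (\<gamma> s)\<bar> = circ_dist (fst (\<gamma> a)) (fst (\<gamma> s))"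
    by metis
  have close: "\<bar>fst (P a) - fst (\<gamma> s)\<bar> < 1/4" if "a \<in> ball s e" for a
    using P_close[of a] circ_dist_le_cyl_dist[of "\<gamma> a" "\<gamma> s"] iso[of a s] that \<open>e0 > 0\<close>
    by (simp add: e_def dist_real_def abs_minus_commute)
  have iso_P: "dist (P a) (P b) = \<bar>a - b\<bar>" if "a \<in> ball s e" "b \<in> ball s e" for a b
  proof -
    have "\<bar>fst (P a) - fst (P b)\<bar> \<le> 1/2"
      using close[OF that(1)] close[OF that(2)] by linarith
    then have "dist (P a) (P b) = cyl_dist (\<gamma> a) (\<gamma> b)"
      by (simp add: cyl_dist_cyl_proj flip: P)
    also have "\<dots> = \<bar>a - b\<bar>"
      using that iso[of a b] by (simp add: e_def dist_real_def abs_minus_commute)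
    finally show ?thesis .
  qed
  have "s \<in> ball s e" "s + e/2 \<in> ball s e" "s + e/2 \<noteq> s"
    using \<open>e0 > 0\<close> by (auto simp: e_def dist_real_def)
  then obtain u where "norm u = 1" and u: "\<And>a. a \<in> ball s e \<Longrightarrow> P a = P s + (a - s) *\<^sub>R u"
    using isometry_from_reals_affine[OF iso_P] by blast
  show ?thesis
  proof
    show "e > 0" using \<open>e0 > 0\<close> by (simp add: e_def)
    show "norm u = 1" by fact
    fix a assume "\<bar>a - s\<bar> < e"
    then have "P a = (P s - s *\<^sub>R u) + a *\<^sub>R u"
      using u[of a] by (simp add: dist_real_def abs_minus_commute algebra_simps)
    then show "\<gamma> a = cyl_proj ((P s - s *\<^sub>R u) + a *\<^sub>R u)"
      using P[of a] by simp
  qed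
qed

lemma eq_0_if_small_multiples_Ints:
  fixes T :: real
  assumes "e > 0" and Ints: "\<And>d. 0 < d \<Longrightarrow> d < e \<Longrightarrow> d * T \<in> \<int>"
  shows "T = 0"
proof (rule ccontr)
  assume "T \<noteq> 0"
  define d where "d = min (e / 2) (1 / (2 * \<bar>T\<bar>))"
  have d: "0 < d" "d < e" "d \<le> 1 / (2 * \<bar>T\<bar>)"
    using \<open>e > 0\<close> \<open>T \<noteq> 0\<close> by (auto simp: d_def)
  then have "\<bar>d * T\<bar> \<le> 1 / 2"
    using \<open>T \<noteq> 0\<close> by (simp add: abs_mult field_simps)
  moreover have "d * T \<noteq> 0"
    using d \<open>T \<noteq> 0\<close> by simp
  ultimately show False
    using Ints_nonzero_abs_ge1[OF Ints[OF d(1,2)]] by linarith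
qed

lemma cyl_line_locally_unique:
  assumes "e > 0"
    and agree: "\<And>a. \<bar>a - s\<bar> < e \<Longrightarrow> cyl_proj (p + a *\<^sub>R u) = cyl_proj (q + a *\<^sub>R v)"
  shows "u = v" "cyl_proj p = cyl_proj q"
proof -
  have diff:
    "(fst p - fst q) + a * (fst u - fst v) \<in> \<int> \<and> (snd p - snd q) + a * (snd u - snd v) = 0"
    if "\<bar>a - s\<bar> < e" for a
    using agree[OF that] unfolding cyl_proj_eq_iff by (simp add: algebra_simps)
  have "d * (fst u - fst v) \<in> \<int> \<and> d * (snd u - snd v) = 0" if "0 < d" "d < e" for d
  proof -
    have "((fst p - fst q) + (s + d) * (fst u - fst v))
        - ((fst p - fst q) + s * (fst u - fst v)) \<in> \<int>"
      using diff[of "s + d"] diff[of s] that \<open>e > 0\<close> by (intro Ints_diff) auto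
    moreover have "((snd p - snd q) + (s + d) * (snd u - snd v))
        - ((snd p - snd q) + s * (snd u - snd v)) = 0"
      using diff[of "s + d"] diff[of s] that \<open>e > 0\<close> by simp
    ultimately show ?thesis by (simp add: algebra_simps)
  qed
  then have "fst u - fst v = 0" "snd u - snd v = 0"
    using eq_0_if_small_multiples_Ints[OF \<open>e > 0\<close>, of "fst u - fst v"] \<open>e > 0\<close>
    by (auto dest!: meta_spec[of _ "e / 2"])
  then show "u = v" by (simp add: prod_eq_iff)
  then show "cyl_proj p = cyl_proj q"
    using diff[of s] \<open>e > 0\<close> unfolding cyl_proj_eq_iff by simp
qed

lemma loc_isometric_imp_cyl_line:
  assumes "loc_isometric \<gamma>"
  obtains p u where "norm u = 1" "\<gamma> = (\<lambda>a. cyl_proj (p + a *\<^sub>R u))"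
proof -
  have "\<forall>s. \<exists>e p u. e > 0 \<and> norm u = 1 \<and>
      (\<forall>a. \<bar>a - s\<bar> < e \<longrightarrow> \<gamma> a = cyl_proj (p + a *\<^sub>R u))"
    using loc_isometric_locally_cyl_line[OF assms] by metis
  then obtain E P U where E: "\<And>s. E s > 0" and U: "\<And>s. norm (U s) = 1"
    and line: "\<And>s a. \<bar>a - s\<bar> < E s \<Longrightarrow> \<gamma> a = cyl_proj (P s + a *\<^sub>R U s)"
    by metis
  have "(U s, cyl_proj (P s)) = (U 0, cyl_proj (P 0))" for s
  proof (rule connected_local_const[where A = UNIV and f = "\<lambda>s. (U s, cyl_proj (P s))"])
    show "\<forall>a\<in>UNIV. eventually (\<lambda>b. (U a, cyl_proj (P a)) = (U b, cyl_proj (P b))) (at a within UNIV)"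
    proof
      fix a :: real
      have "U a = U b \<and> cyl_proj (P a) = cyl_proj (P b)" if "\<bar>b - a\<bar> < E a" for b
      proof -
        have "cyl_proj (P a + x *\<^sub>R U a) = cyl_proj (P b + x *\<^sub>R U b)"
          if "\<bar>x - b\<bar> < min (E b) (E a - \<bar>b - a\<bar>)" for x
        proof -
          have "\<bar>x - a\<bar> < E a"
            using that by linarith
          then show ?thesis
            using line[of x a] line[of x b] that by simp
        qed
        moreover have "min (E b) (E a - \<bar>b - a\<bar>) > 0"
          using E[of b] \<open>\<bar>b - a\<bar> < E a\<close> by simp
        ultimately show ?thesis
          using cyl_line_locally_unique by blast
      qed
      then show "eventually (\<lambda>b. (U a, cyl_proj (P a)) = (U b, cyl_proj (P b))) (at a within UNIV)"
        unfolding eventually_at using E[of a] by (auto simp: dist_real_def)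
    qed
  qed auto
  then have "U a = U 0" "cyl_proj (P a) = cyl_proj (P 0)" for a
    by simp_all
  have "\<gamma> a = cyl_proj (P 0 + a *\<^sub>R U 0)" for a
  proof -
    have "\<gamma> a = cyl_proj (P a + a *\<^sub>R U 0)"
      using line[of a a] E[of a] \<open>U a = U 0\<close> by simp
    also have "\<dots> = cyl_proj (P 0 + a *\<^sub>R U 0)"
      using \<open>cyl_proj (P a) = cyl_proj (P 0)\<close> by (rule cyl_proj_add_cong)
    finally show ?thesis .
  qed
  then show ?thesis
    using that U by blast
qed

theorem cyl_geodesic_iff_cyl_line:
  "cyl_geodesic G \<longleftrightarrow> (\<exists>p u. u \<noteq> 0 \<and> G = range (\<lambda>a. cyl_proj (p + a *\<^sub>R u)))"
proof
  assume "cyl_geodesic G"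
  then obtain \<gamma> where "loc_isometric \<gamma>" "G = range \<gamma>"
    unfolding cyl_geodesic_def by blast
  moreover obtain p u where "norm u = 1" "\<gamma> = (\<lambda>a. cyl_proj (p + a *\<^sub>R u))"
    using loc_isometric_imp_cyl_line[OF \<open>loc_isometric \<gamma>\<close>] .
  ultimately show "\<exists>p u. u \<noteq> 0 \<and> G = range (\<lambda>a. cyl_proj (p + a *\<^sub>R u))"
    by (intro exI[of _ p] exI[of _ u]) auto
next
  assume "\<exists>p u. u \<noteq> 0 \<and> G = range (\<lambda>a. cyl_proj (p + a *\<^sub>R u))"
  then obtain p u where "u \<noteq> 0" and G: "G = range (\<lambda>a. cyl_proj (p + a *\<^sub>R u))"
    by blast
  define r where "r = norm u"
  have "r \<noteq> 0" "u = r *\<^sub>R ((1 / r) *\<^sub>R u)"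
    using \<open>u \<noteq> 0\<close> by (simp_all add: r_def)
  then have "G = range (\<lambda>a. cyl_proj (p + a *\<^sub>R ((1 / r) *\<^sub>R u)))"
    unfolding G using range_line_reparam[of r cyl_proj p "(1 / r) *\<^sub>R u" 0] by simp
  moreover have "norm ((1 / r) *\<^sub>R u) = 1"
    using \<open>u \<noteq> 0\<close> by (simp add: r_def)
  ultimately show "cyl_geodesic G"
    unfolding cyl_geodesic_def using loc_isometric_cyl_line by blast
qed

section \<open>Horizontal circles and helices\<close>

definition horiz :: "real \<Rightarrow> (real \<times> real) set" where
  "horiz d = {0..<1} \<times> {d}"

text \<open>The non-horizontal geodesics, as graphs over the height; the slope \<open>p = 0\<close> gives the
  vertical lines.\<close>
definition helix :: "real \<Rightarrow> real \<Rightarrow> (real \<times> real) set" where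
  "helix c p = range (\<lambda>t. (frac (c + p * t), t))"

lemma mem_vert: "(x, t) \<in> vert \<theta> \<longleftrightarrow> x = \<theta>"
  by (simp add: vert_def)

lemma mem_horiz: "(x, t) \<in> horiz d \<longleftrightarrow> x \<in> {0..<1} \<and> t = d"
  by (simp add: horiz_def)

lemma mem_helix: "(x, t) \<in> helix c p \<longleftrightarrow> x = frac (c + p * t)"
  by (auto simp: helix_def)

lemma horiz_eq_cyl_line: "horiz d = range (\<lambda>a. cyl_proj ((0, d) + a *\<^sub>R (1, 0)))"
proof -
  have "(x, t) \<in> horiz d \<longleftrightarrow> (x, t) \<in> range (\<lambda>a. (frac a, d))" for x t
    using frac_ge_0 frac_lt_1 by (auto simp: mem_horiz intro!: image_eqI[of _ _ x])
  then show ?thesis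
    by (auto simp: cyl_proj_def)
qed

lemma helix_eq_cyl_line: "helix c p = range (\<lambda>a. cyl_proj ((c, 0) + a *\<^sub>R (p, 1)))"
  by (simp add: helix_def cyl_proj_def mult.commute)

lemma cyl_geodesic_horiz: "cyl_geodesic (horiz d)"
  unfolding cyl_geodesic_iff_cyl_line horiz_eq_cyl_line
  by (rule exI[of _ "(0, d)"], rule exI[of _ "(1, 0)"]) (simp add: zero_prod_def)

lemma cyl_geodesic_helix: "cyl_geodesic (helix c p)"
  unfolding cyl_geodesic_iff_cyl_line helix_eq_cyl_line
  by (rule exI[of _ "(c, 0)"], rule exI[of _ "(p, 1)"]) (simp add: zero_prod_def)

lemma cyl_geodesic_cases:
  assumes "cyl_geodesic G"
  obtains (horiz) d where "G = horiz d" | (helix) c p where "G = helix c p"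
proof -
  obtain q u where "u \<noteq> 0" and G_line: "G = range (\<lambda>a. cyl_proj (q + a *\<^sub>R u))"
    using assms unfolding cyl_geodesic_iff_cyl_line by blast
  obtain q1 q2 u1 u2 where "q = (q1, q2)" "u = (u1, u2)"
    by fastforce
  with G_line \<open>u \<noteq> 0\<close> have "(u1, u2) \<noteq> 0"
    and G: "G = range (\<lambda>a. cyl_proj ((q1, q2) + a *\<^sub>R (u1, u2)))"
    by simp_all
  show ?thesis
  proof (cases "u2 = 0")
    case True
    then have "G = horiz q2"
      unfolding G horiz_eq_cyl_line
      using range_line_reparam[of u1 cyl_proj "(0, q2)" "(1, 0)" q1] \<open>(u1, u2) \<noteq> 0\<close>
      by (simp add: zero_prod_def)
    then show ?thesis by (rule that(1))
  next
    case False
    define k where "k = u1 / u2"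
    have "G = helix (q1 - q2 * k) k"
      unfolding G helix_eq_cyl_line
      using range_line_reparam[of u2 cyl_proj "(q1 - q2 * k, 0)" "(k, 1)" q2] False
      by (simp add: k_def algebra_simps)
    then show ?thesis by (rule that(2))
  qed
qed

lemma cyl_geodesic_subset_Cyl: "cyl_geodesic G \<Longrightarrow> G \<subseteq> Cyl"
  unfolding cyl_geodesic_def loc_isometric_def by blast

lemma vert_subset_Cyl: "\<theta> \<in> {0..<1} \<Longrightarrow> vert \<theta> \<subseteq> Cyl"
  by (auto simp: vert_def Cyl_def)

lemma helix_0: "helix c 0 = vert (frac c)"
  by (auto simp: helix_def vert_def)

lemma cyl_geodesic_vert: "\<theta> \<in> {0..<1} \<Longrightarrow> cyl_geodesic (vert \<theta>)"
  using cyl_geodesic_helix[of \<theta> 0] by (simp add: helix_0 frac_eq)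

lemma helix_vert_point:
  assumes "p \<noteq> 0" "\<theta> \<in> {0..<1}"
  shows "(\<theta>, (\<theta> - c + of_int k) / p) \<in> helix c p"
  using assms by (simp add: mem_helix frac_eq)

lemma cyl_geodesic_disjoint_vert_imp_vert:
  assumes "cyl_geodesic G" "\<theta> \<in> {0..<1}" "G \<inter> vert \<theta> = {}"
  obtains \<theta>' where "G = vert \<theta>'"
  using assms(1)
proof (cases rule: cyl_geodesic_cases)
  case (horiz d)
  then have "(\<theta>, d) \<in> G \<inter> vert \<theta>"
    using assms(2) by (simp add: mem_horiz mem_vert)
  with assms(3) show ?thesis by blast
next
  case (helix c p)
  show ?thesis
  proof (cases "p = 0")
    case True
    with helix show ?thesis by (simp add: helix_0 that)
  next
    case False
    then have "(\<theta>, (\<theta> - c + of_int 0) / p) \<in> G \<inter> vert \<theta>"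
      using helix helix_vert_point[OF False assms(2)] by (simp only: mem_vert IntI)
    with assms(3) show ?thesis by blast
  qed
qed

lemma cyl_geodesic_Int_vert_singleton:
  assumes "cyl_geodesic G" "\<theta> \<in> {0..<1}" "G \<inter> vert \<theta> = {(\<theta>, s)}"
  shows "G = horiz s"
  using assms(1)
proof (cases rule: cyl_geodesic_cases)
  case (horiz d)
  then have "(\<theta>, d) \<in> G \<inter> vert \<theta>"
    using assms(2) by (simp add: mem_horiz mem_vert)
  then have "d = s"
    unfolding assms(3) by simp
  with horiz show ?thesis by simp
next
  case (helix c p)
  have False
  proof (cases "p = 0")
    case True
    have "(\<theta>, s) \<in> G"
      using assms(3) by blast
    then have "G = vert \<theta>"
      using helix True by (simp add: helix_0 mem_vert)
    then have "(\<theta>, s + 1) \<in> G \<inter> vert \<theta>"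
      by (simp add: mem_vert)
    with assms(3) show False by simp
  next
    case False
    then have "(\<theta>, (\<theta> - c + of_int k) / p) \<in> G \<inter> vert \<theta>" for k
      using helix helix_vert_point[OF False assms(2)] by (simp only: mem_vert IntI)
    then have "(\<theta> - c + of_int k) / p = s" for k
      unfolding assms(3) by simp
    from this[of 0] this[of 1] have "(\<theta> - c) / p = (\<theta> - c + 1) / p"
      by simp
    with False show False by (simp add: divide_cancel_right)
  qed
  then show ?thesis ..
qed

lemma cyl_geodesic_two_heights_imp_helix:
  assumes "cyl_geodesic G" "(\<theta>, s) \<in> G" "(\<theta>, s') \<in> G" "s \<noteq> s'"
  obtains c p where "G = helix c p"
  using assms(1)
proof (cases rule: cyl_geodesic_cases)
  case (horiz d)
  with assms(2-4) show ?thesis by (simp add: mem_horiz)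
qed

lemma helix_disjoint_imp_same_slope:
  assumes "helix c p \<inter> helix c' p' = {}"
  shows "p = p'"
proof (rule ccontr)
  assume "p \<noteq> p'"
  define t where "t = (c' - c) / (p - p')"
  have "c + p * t = c' + p' * t"
    using \<open>p \<noteq> p'\<close> by (simp add: t_def field_simps)
  then have "(frac (c + p * t), t) \<in> helix c p \<inter> helix c' p'"
    by (simp add: mem_helix)
  with assms show False by blast
qed

lemma helix_disjoint_translate:
  assumes "p \<notin> \<int>"
  shows "helix c p \<inter> helix (c - p) p = {}"
proof -
  have "frac (c + p * t) \<noteq> frac (c - p + p * t)" for t
    using assms by (simp add: frac_eq_iff_diff_Ints)
  then show ?thesis
    by (auto simp: helix_def)
qed

lemma helix_parallelogram:
  assumes "(x, a) \<in> helix c q" "(y, a') \<in> helix c q" "(x, b) \<in> helix c' q" "(y, b') \<in> helix c' q"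
  shows "(x, a + (b' - b) - (a' - a)) \<in> helix c q"
proof -
  have "(c + q * a) - (c' + q * b) \<in> \<int>" "(c + q * a') - (c' + q * b') \<in> \<int>"
    using assms by (simp_all add: mem_helix frac_eq_iff_diff_Ints)
  then have "((c + q * a) - (c' + q * b)) - ((c + q * a') - (c' + q * b')) \<in> \<int>"
    by (rule Ints_diff)
  also have "((c + q * a) - (c' + q * b)) - ((c + q * a') - (c' + q * b'))
      = (c + q * (a + (b' - b) - (a' - a))) - (c + q * a)"
    by (simp add: algebra_simps)
  finally have "frac (c + q * (a + (b' - b) - (a' - a))) = frac (c + q * a)"
    by (simp only: frac_eq_iff_diff_Ints)
  then show ?thesis
    using assms(1) by (simp add: mem_helix)
qed


section \<open>Geodesic-preserving bijections fixing a vertical line\<close>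

locale geodesic_map_fixing_vert =
  fixes f :: "real \<times> real \<Rightarrow> real \<times> real" and \<theta>0 :: real
  assumes \<theta>0_range: "\<theta>0 \<in> {0..<1}"
    and bij: "bij_betw f Cyl Cyl"
    and geodesic_preserving: "geodesic_preserving f"
    and image_vert0: "f ` vert \<theta>0 = vert \<theta>0"
begin

lemma image_cyl_geodesic: "cyl_geodesic G \<Longrightarrow> cyl_geodesic (f ` G)"
  using geodesic_preserving unfolding geodesic_preserving_def by blast

lemma inj_on_Cyl: "inj_on f Cyl"
  using bij by (rule bij_betw_imp_inj_on)

lemma image_Int_vert0:
  assumes "G \<subseteq> Cyl"
  shows "f ` G \<inter> vert \<theta>0 = f ` (G \<inter> vert \<theta>0)"
proof
  show "f ` (G \<inter> vert \<theta>0) \<subseteq> f ` G \<inter> vert \<theta>0"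
    using image_vert0 by blast
  show "f ` G \<inter> vert \<theta>0 \<subseteq> f ` (G \<inter> vert \<theta>0)"
  proof
    fix z assume "z \<in> f ` G \<inter> vert \<theta>0"
    then obtain g v where "g \<in> G" "v \<in> vert \<theta>0" "z = f g" "z = f v"
      using image_vert0 by blast
    moreover have "g = v"
      using calculation assms vert_subset_Cyl[OF \<theta>0_range] inj_on_Cyl by (metis inj_onD subsetD)
    ultimately show "z \<in> f ` (G \<inter> vert \<theta>0)"
      by blast
  qed
qed

definition height :: "real \<Rightarrow> real" where
  "height t = snd (f (\<theta>0, t))"

lemma f_vert0: "f (\<theta>0, t) = (\<theta>0, height t)"
proof -
  have "f (\<theta>0, t) \<in> vert \<theta>0"
    using image_vert0 by (auto simp: vert_def)
  then show ?thesis
    by (metis height_def mem_vert prod.collapse)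
qed

lemma inj_height: "inj height"
proof
  fix s t assume "height s = height t"
  then have "f (\<theta>0, s) = f (\<theta>0, t)"
    by (simp add: f_vert0)
  moreover have "(\<theta>0, s) \<in> Cyl" "(\<theta>0, t) \<in> Cyl"
    using vert_subset_Cyl[OF \<theta>0_range] by (auto simp: mem_vert)
  ultimately show "s = t"
    using inj_on_Cyl by (auto dest: inj_onD)
qed

lemma vert0_point_in_image:
  assumes "G \<subseteq> Cyl" "(\<theta>0, s) \<in> f ` G"
  obtains t where "(\<theta>0, t) \<in> G" "height t = s"
proof -
  have "(\<theta>0, s) \<in> f ` G \<inter> vert \<theta>0"
    using assms(2) by (simp add: mem_vert)
  then have "(\<theta>0, s) \<in> f ` (G \<inter> vert \<theta>0)"
    using image_Int_vert0[OF assms(1)] by simp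
  then obtain t where "(\<theta>0, t) \<in> G" "(\<theta>0, s) = f (\<theta>0, t)"
    by (auto simp: vert_def)
  then show ?thesis
    using that by (simp add: f_vert0)
qed

lemma image_vert:
  assumes "\<theta> \<in> {0..<1}"
  obtains \<theta>' where "f ` vert \<theta> = vert \<theta>'"
proof (cases "\<theta> = \<theta>0")
  case True
  with image_vert0 that show ?thesis by blast
next
  case False
  then have "f ` vert \<theta> \<inter> vert \<theta>0 = {}"
    using image_Int_vert0[OF vert_subset_Cyl[OF assms]] by (auto simp: vert_def)
  then show ?thesis
    using cyl_geodesic_disjoint_vert_imp_vert image_cyl_geodesic cyl_geodesic_vert assms \<theta>0_range that
    by blast
qed

lemma image_horiz: "f ` horiz t = horiz (height t)"
proof -
  have "horiz t \<inter> vert \<theta>0 = {(\<theta>0, t)}"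
    using \<theta>0_range by (auto simp: horiz_def vert_def)
  then have "f ` horiz t \<inter> vert \<theta>0 = {(\<theta>0, height t)}"
    using image_Int_vert0 cyl_geodesic_subset_Cyl[OF cyl_geodesic_horiz] by (simp add: f_vert0)
  then show ?thesis
    using cyl_geodesic_Int_vert_singleton image_cyl_geodesic cyl_geodesic_horiz \<theta>0_range by blast
qed

lemma f_on_vert:
  assumes "\<theta> \<in> {0..<1}"
  shows "\<exists>\<phi>. \<forall>t. f (\<theta>, t) = (\<phi>, height t)"
proof (intro exI allI)
  fix t
  obtain \<theta>' where "f ` vert \<theta> = vert \<theta>'"
    using image_vert[OF assms] .
  then have "f (\<theta>, t) \<in> vert \<theta>'" "f (\<theta>, 0) \<in> vert \<theta>'"
    by (auto simp: vert_def)
  then have "fst (f (\<theta>, t)) = fst (f (\<theta>, 0))"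
    by (auto simp: vert_def)
  moreover have "f (\<theta>, t) \<in> horiz (height t)"
    using assms by (auto simp: mem_horiz simp flip: image_horiz)
  then have "snd (f (\<theta>, t)) = height t"
    by (auto simp: horiz_def)
  ultimately show "f (\<theta>, t) = (fst (f (\<theta>, 0)), height t)"
    by (metis prod.collapse)
qed

lemma image_helix:
  assumes "p \<noteq> 0"
  obtains c' q where "f ` helix c p = helix c' q"
proof -
  have "(\<theta>0, height ((\<theta>0 - c + of_int k) / p)) \<in> f ` helix c p" for k
    using helix_vert_point[OF assms \<theta>0_range] by (metis f_vert0 imageI)
  moreover have "height ((\<theta>0 - c + of_int 0) / p) \<noteq> height ((\<theta>0 - c + of_int 1) / p)"
    using assms inj_height by (simp add: inj_eq divide_cancel_right)
  ultimately show ?thesis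
    using cyl_geodesic_two_heights_imp_helix image_cyl_geodesic cyl_geodesic_helix that by metis
qed

lemma image_translate_helix_parallel:
  assumes "p \<notin> \<int>"
  obtains c1 c2 q where "f ` helix c p = helix c1 q" "f ` helix (c - p) p = helix c2 q"
proof -
  have "p \<noteq> 0"
    using assms by auto
  obtain c1 q where fH: "f ` helix c p = helix c1 q"
    using image_helix[OF \<open>p \<noteq> 0\<close>] .
  obtain c2 q' where fH': "f ` helix (c - p) p = helix c2 q'"
    using image_helix[OF \<open>p \<noteq> 0\<close>] .
  have "helix c p \<subseteq> Cyl" "helix (c - p) p \<subseteq> Cyl"
    by (simp_all add: cyl_geodesic_subset_Cyl cyl_geodesic_helix)
  then have "f ` helix c p \<inter> f ` helix (c - p) p = f ` (helix c p \<inter> helix (c - p) p)"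
    by (simp add: inj_on_image_Int[OF inj_on_Cyl])
  also have "\<dots> = {}"
    using helix_disjoint_translate[OF assms] by simp
  finally have "f ` helix c p \<inter> f ` helix (c - p) p = {}" .
  then have "q' = q"
    unfolding fH fH' by (rule helix_disjoint_imp_same_slope[symmetric])
  with fH fH' show ?thesis
    using that by blast
qed

lemma height_step_defect:
  assumes "p \<notin> \<int>"
  obtains T where "p * T \<in> \<int>"
    "height T = height 0 + (height (t + 1) - height t) - (height 1 - height 0)"
proof -
  define H where "H = helix \<theta>0 p"
  define \<kappa> where "\<kappa> = frac (\<theta>0 + p * t)"
  obtain c1 c2 q where fH: "f ` H = helix c1 q" and fH': "f ` helix (\<theta>0 - p) p = helix c2 q"
    using image_translate_helix_parallel[OF assms] unfolding H_def .
  obtain \<phi> where f_\<kappa>: "\<And>s. f (\<kappa>, s) = (\<phi>, height s)"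
    using f_on_vert[of \<kappa>] by (auto simp: \<kappa>_def frac_lt_1)
  have "(\<theta>0, 0) \<in> H" "(\<kappa>, t) \<in> H"
    "(\<theta>0, 1) \<in> helix (\<theta>0 - p) p" "(\<kappa>, t + 1) \<in> helix (\<theta>0 - p) p"
    using \<theta>0_range by (simp_all add: H_def \<kappa>_def mem_helix frac_eq algebra_simps)
  then have "f (\<theta>0, 0) \<in> f ` H" "f (\<kappa>, t) \<in> f ` H"
    "f (\<theta>0, 1) \<in> f ` helix (\<theta>0 - p) p" "f (\<kappa>, t + 1) \<in> f ` helix (\<theta>0 - p) p"
    by blast+
  then have "(\<theta>0, height 0) \<in> helix c1 q" "(\<phi>, height t) \<in> helix c1 q"
    "(\<theta>0, height 1) \<in> helix c2 q" "(\<phi>, height (t + 1)) \<in> helix c2 q"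
    by (simp_all only: fH fH' f_vert0 f_\<kappa>)
  then have "(\<theta>0, height 0 + (height (t + 1) - height 1) - (height t - height 0)) \<in> f ` H"
    unfolding fH by (rule helix_parallelogram)
  with cyl_geodesic_subset_Cyl[OF cyl_geodesic_helix] obtain T where "(\<theta>0, T) \<in> H"
    and T: "height T = height 0 + (height (t + 1) - height 1) - (height t - height 0)"
    unfolding H_def by (rule vert0_point_in_image)
  then have "p * T \<in> \<int>"
    using \<theta>0_range frac_eq_iff_diff_Ints[of "\<theta>0 + p * T" \<theta>0]
    by (simp add: H_def mem_helix frac_eq)
  moreover from T have "height T = height 0 + (height (t + 1) - height t) - (height 1 - height 0)"
    by simp
  ultimately show ?thesis
    by (rule that)
qed

lemma height_step: "height (t + 1) - height t = height 1 - height 0"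
proof -
  define s where "s = height 0 + (height (t + 1) - height t) - (height 1 - height 0)"
  have not_Int: "d \<notin> \<int>" if "0 < d" "d < 1" for d :: real
    using that Ints_nonzero_abs_ge1[of d] by auto
  obtain T where T: "height T = s"
    using height_step_defect[OF not_Int[of "1/2"]] s_def by auto
  \<comment> \<open>by injectivity of \<open>height\<close>, the same \<open>T\<close> serves for every slope\<close>
  have "d * T \<in> \<int>" if d: "0 < d" "d < 1" for d
  proof -
    obtain T' where "d * T' \<in> \<int>" "height T' = s"
      using height_step_defect[OF not_Int[OF d]] s_def by auto
    with T inj_height show ?thesis
      by (metis injD)
  qed
  then have "T = 0"
    by (intro eq_0_if_small_multiples_Ints[of 1]) auto
  with T show ?thesis
    by (simp add: s_def)
qed

end

theorem lemma4p5:
  fixes f :: "real \<times> real \<Rightarrow> real \<times> real" and \<theta>0 :: real and x y :: "real \<times> real"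
  assumes "\<theta>0 \<in> {0..<1}"
    and "bij_betw f Cyl Cyl"
    and "geodesic_preserving f"
    and "f ` vert \<theta>0 = vert \<theta>0"
    and "f (\<theta>0, 0) = (\<theta>0, 0)"
    and "f (\<theta>0, 1) = (\<theta>0, 1)"
    and "x \<in> Cyl" and "y \<in> Cyl"
    and "\<exists>\<theta>. x \<in> vert \<theta> \<and> y \<in> vert \<theta>"
    and "cyl_dist x y = 1"
  shows "cyl_dist (f x) (f y) = 1"
proof -
  interpret geodesic_map_fixing_vert f \<theta>0
    using assms(1-4) by unfold_locales
  have "height 0 = 0" "height 1 = 1"
    using assms(5,6) by (simp_all add: f_vert0)
  then have step: "height (t + 1) - height t = 1" for t
    using height_step by simp
  obtain \<theta> t1 t2 where x: "x = (\<theta>, t1)" and y: "y = (\<theta>, t2)"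
    using assms(9) by (auto simp: vert_def)
  have "\<theta> \<in> {0..<1}"
    using assms(7) by (simp add: x Cyl_def)
  have "\<bar>t1 - t2\<bar> = 1"
    using assms(10) by (simp add: x y cyl_dist_vert)
  then consider "t2 = t1 + 1" | "t1 = t2 + 1"
    by linarith
  then have "\<bar>height t1 - height t2\<bar> = 1"
    by cases (use step[of t1] step[of t2] in auto)
  moreover obtain \<phi> where "\<And>t. f (\<theta>, t) = (\<phi>, height t)"
    using f_on_vert[OF \<open>\<theta> \<in> {0..<1}\<close>] by blast
  ultimately show ?thesis
    by (simp add: x y cyl_dist_vert)
qed

end
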